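(* Let $\mathsf{X}$ be a real Hilbert space with norm $\|\cdot\|$, let $\mathcal{H}\subset\mathsf{X}$ be a closed linear subspace, and let $\mathcal{M}\subset\mathsf{X}$ be a closed subset that is closed with respect to scalar multiplication ($z\in\mathcal{M}\Rightarrow \alpha z\in\mathcal{M}$ for all real $\alpha$). Assume every point of $\mathsf{X}$ has at least one closest point in $\mathcal{M}$, and let $\Pi_{\mathcal{M}}$ be a map assigning to each point one such closest point; let $\Pi_{\mathcal{H}}$ be the orthogonal projection onto $\mathcal{H}$. For $x\in\mathsf{X}$ define $y_0=x$ and $y_{k+1}=\Pi_{\mathcal{H}}\Pi_{\mathcal{M}}y_k$ for $k\ge 0$. Then: 1. $\|y_k-\Pi_{\mathcal{M}}y_k\|\to0$ and $\|\Pi_{\mathcal{M}}y_k-y_{k+1}\|\to 0$ as $k\to\infty$. 2. If moreover $\mathcal{M}\cap B_1$ is compact, where $B_1=\{z\in\mathsf{X}:\|z\|\le1\}$, then there is a subsequence $(y_{i_k})$ of $(y_k)$ converging to a point $y^*\in\mathcal{M}\cap\mathcal{H}$. *)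

theory Defs
  imports "HOL-Analysis.Analysis"
begin

definition orth_proj :: "'a::real_inner set \<Rightarrow> 'a \<Rightarrow> 'a" where
  "orth_proj H x = (THE p. p \<in> H \<and> (\<forall>h\<in>H. inner (x - p) h = 0))"

end

theory Submission
  imports Defs
begin

(*
  A closest point m of a cone M to u is orthogonal to the residual u - m, because M contains the
  whole line through 0 and m; the orthogonal projection onto H has the same property (its existence
  is the Hilbert projection theorem, obtained from the parallelogram law). Pythagoras twice gives
    ||y k||^2 = ||y k - PM (y k)||^2 + ||PM (y k) - y (k+1)||^2 + ||y (k+1)||^2,
  so both squared residuals are summable and tend to 0. By scaling, M \<inter> cball 0 R is compact
  for every R > 0, so the bounded sequence PM (y k) has a convergent subsequence in M; the
  corresponding points y (k+1) of H have the same limit, which therefore lies in M \<inter> H.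
*)

lemma inner_eq_0_if_closest_on_line:
  fixes u m g :: "'a::real_inner"
  assumes closest: "\<And>t::real. dist u m \<le> dist u (m + t *\<^sub>R g)"
  shows "inner (u - m) g = 0"
proof (cases "g = 0")
  case False
  define v c where "v = u - m" and "c = inner v g"
  define t where "t = c / (norm g)\<^sup>2"
  have g: "(norm g)\<^sup>2 > 0" using False by simp
  have "(norm (v - t *\<^sub>R g))\<^sup>2 = (norm v)\<^sup>2 - 2 * t * c + t\<^sup>2 * (norm g)\<^sup>2"
    unfolding power2_norm_eq_inner
    by (simp add: inner_diff_left inner_diff_right c_def inner_commute power2_eq_square)
  also have "\<dots> = (norm v)\<^sup>2 - c\<^sup>2 / (norm g)\<^sup>2"
    using g by (simp add: t_def field_simps power2_eq_square)
  finally have "(norm (v - t *\<^sub>R g))\<^sup>2 = (norm v)\<^sup>2 - c\<^sup>2 / (norm g)\<^sup>2" .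
  moreover have "norm v \<le> norm (v - t *\<^sub>R g)"
    using closest[of t] by (simp add: v_def dist_norm algebra_simps)
  ultimately have "c\<^sup>2 / (norm g)\<^sup>2 \<le> 0"
    by (smt (verit) norm_ge_zero power_mono)
  with g show ?thesis
    by (simp add: c_def v_def divide_le_0_iff)
qed simp

lemma parallelogram_law:
  fixes a b :: "'a::real_inner"
  shows "(norm (a + b))\<^sup>2 + (norm (a - b))\<^sup>2 = 2 * (norm a)\<^sup>2 + 2 * (norm b)\<^sup>2"
  by (simp add: power2_norm_eq_inner inner_add_left inner_add_right
      inner_diff_left inner_diff_right inner_commute)

lemma norm_diff_squared_le_convex:
  fixes S :: "'a::real_inner set"
  assumes "convex S" "a \<in> S" "b \<in> S"
  shows "(norm (a - b))\<^sup>2 \<le> 2 * (dist p a)\<^sup>2 + 2 * (dist p b)\<^sup>2 - 4 * (infdist p S)\<^sup>2"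
proof -
  define mid where "mid = (1/2::real) *\<^sub>R a + (1/2::real) *\<^sub>R b"
  have "mid \<in> S"
    unfolding mid_def using assms by (intro convexD) auto
  then have "(infdist p S)\<^sup>2 \<le> (norm (p - mid))\<^sup>2"
    by (simp add: infdist_nonneg infdist_le power_mono flip: dist_norm)
  moreover have "(p - a) + (p - b) = 2 *\<^sub>R (p - mid)" "(p - a) - (p - b) = -(a - b)"
    by (simp_all add: mid_def algebra_simps scaleR_2)
  ultimately show ?thesis
    using parallelogram_law[of "p - a" "p - b"]
    by (simp add: dist_norm power_mult_distrib norm_minus_commute[of b a])
qed

lemma Cauchy_minimizing_sequence_convex:
  fixes S :: "'a::real_inner set"
  assumes "convex S" and hS: "\<And>n. h n \<in> S"
    and minimizing: "(\<lambda>n. dist p (h n)) \<longlonglongrightarrow> infdist p S"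
  shows "Cauchy h"
proof (rule metric_CauchyI)
  fix \<epsilon> :: real assume "0 < \<epsilon>"
  define g where "g n = (dist p (h n))\<^sup>2 - (infdist p S)\<^sup>2" for n
  have "g \<longlonglongrightarrow> 0"
    unfolding g_def
    using tendsto_diff[OF tendsto_power[OF minimizing, of 2] tendsto_const, of "(infdist p S)\<^sup>2"]
    by simp
  then obtain N where N: "\<And>n. N \<le> n \<Longrightarrow> \<bar>g n\<bar> < \<epsilon>\<^sup>2 / 4"
    using LIMSEQ_D[of g 0 "\<epsilon>\<^sup>2 / 4"] \<open>0 < \<epsilon>\<close> by auto
  have "dist (h m) (h n) < \<epsilon>" if "N \<le> m" "N \<le> n" for m n
  proof -
    have "(dist (h m) (h n))\<^sup>2 \<le> 2 * g m + 2 * g n"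
      using norm_diff_squared_le_convex[OF \<open>convex S\<close> hS[of m] hS[of n], of p]
      by (simp add: g_def dist_norm[of "h m"])
    also have "\<dots> < \<epsilon>\<^sup>2"
      using N[OF that(1)] N[OF that(2)] unfolding abs_less_iff by linarith
    finally show ?thesis
      using \<open>0 < \<epsilon>\<close> by (simp add: power_less_imp_less_base)
  qed
  then show "\<exists>M. \<forall>m\<ge>M. \<forall>n\<ge>M. dist (h m) (h n) < \<epsilon>" by blast
qed

lemma closest_point_exists_convex:
  fixes S :: "'a::{real_inner, complete_space} set"
  assumes "convex S" "closed S" "S \<noteq> {}"
  obtains q where "q \<in> S" "\<And>z. z \<in> S \<Longrightarrow> dist p q \<le> dist p z"
proof -
  define d where "d = infdist p S"
  have "\<exists>h\<in>S. dist p h < d + inverse (Suc n)" for n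
  proof -
    have "infdist p S < d + inverse (Suc n)" by (simp add: d_def)
    then show ?thesis using assms(3) by (simp add: infdist_notempty cINF_less_iff)
  qed
  then obtain h where hS: "\<And>n. h n \<in> S" and h_near: "\<And>n. dist p (h n) < d + inverse (Suc n)"
    by metis
  have minimizing: "(\<lambda>n. dist p (h n)) \<longlonglongrightarrow> d"
  proof (rule tendsto_sandwich[of "\<lambda>_. d" _ _ "\<lambda>n. d + inverse (Suc n)"])
    show "\<forall>\<^sub>F n in sequentially. d \<le> dist p (h n)"
      using hS by (simp add: d_def infdist_le)
    show "\<forall>\<^sub>F n in sequentially. dist p (h n) \<le> d + inverse (Suc n)"
      using h_near by (simp add: less_imp_le)
    show "(\<lambda>n. d + inverse (Suc n)) \<longlonglongrightarrow> d"
      using tendsto_add[OF tendsto_const LIMSEQ_inverse_real_of_nat, of d] by simp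
  qed simp
  then have "Cauchy h"
    using Cauchy_minimizing_sequence_convex[OF assms(1) hS] by (simp add: d_def)
  then obtain q where "h \<longlonglongrightarrow> q"
    using Cauchy_convergent convergent_def by blast
  then have "q \<in> S" and "(\<lambda>n. dist p (h n)) \<longlonglongrightarrow> dist p q"
    using assms(2) hS closed_sequentially by (blast, intro tendsto_intros)
  with minimizing have "dist p q = d"
    using LIMSEQ_unique by blast
  then show ?thesis
    using that \<open>q \<in> S\<close> infdist_le unfolding d_def by metis
qed

lemma ex1_orthogonal_decomposition:
  fixes H :: "'a::{real_inner, complete_space} set"
  assumes "subspace H" "closed H"
  shows "\<exists>!q. q \<in> H \<and> (\<forall>h\<in>H. inner (p - q) h = 0)"
proof -
  obtain q where "q \<in> H" and q_closest: "\<And>z. z \<in> H \<Longrightarrow> dist p q \<le> dist p z"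
    using closest_point_exists_convex[OF subspace_imp_convex] subspace_0 assms by blast
  have q_orth: "\<forall>h\<in>H. inner (p - q) h = 0"
    using \<open>q \<in> H\<close> assms(1)
    by (auto intro!: inner_eq_0_if_closest_on_line q_closest subspace_add subspace_scale)
  have "r = q" if "r \<in> H" "\<forall>h\<in>H. inner (p - r) h = 0" for r
  proof -
    have "r - q \<in> H"
      using assms(1) that(1) \<open>q \<in> H\<close> by (simp add: subspace_diff)
    then have "inner (r - q) (r - q) = inner (p - q) (r - q) - inner (p - r) (r - q)"
      by (simp add: inner_diff_left)
    also have "\<dots> = 0"
      using q_orth that(2) \<open>r - q \<in> H\<close> by simp
    finally show ?thesis by simp
  qed
  with \<open>q \<in> H\<close> q_orth show ?thesis by blast
qed

lemma
  fixes H :: "'a::{real_inner, complete_space} set"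
  assumes "subspace H" "closed H"
  shows orth_proj_in: "orth_proj H p \<in> H"
    and orth_proj_orthogonal: "h \<in> H \<Longrightarrow> inner (p - orth_proj H p) h = 0"
  using theI'[OF ex1_orthogonal_decomposition[OF assms, of p]]
  by (simp_all add: orth_proj_def)

lemma closest_point_cone_orthogonal:
  assumes cone: "\<And>z \<alpha>. z \<in> M \<Longrightarrow> (\<alpha>::real) *\<^sub>R z \<in> M"
    and "m \<in> M" and closest: "\<And>z. z \<in> M \<Longrightarrow> dist u m \<le> dist u z"
  shows "inner (u - m) m = 0"
proof (rule inner_eq_0_if_closest_on_line)
  fix t :: real
  show "dist u m \<le> dist u (m + t *\<^sub>R m)"
    using closest[OF cone[OF \<open>m \<in> M\<close>, of "1 + t"]] by (simp add: algebra_simps)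
qed

lemma compact_cone_Int_cball:
  fixes M :: "'a::real_normed_vector set"
  assumes cone: "\<And>z \<alpha>. z \<in> M \<Longrightarrow> (\<alpha>::real) *\<^sub>R z \<in> M"
    and "compact (M \<inter> cball 0 1)" "0 < R"
  shows "compact (M \<inter> cball 0 R)"
proof -
  have "M \<inter> cball 0 R = (\<lambda>z. R *\<^sub>R z) ` (M \<inter> cball 0 1)"
  proof (intro equalityI subsetI)
    fix z assume "z \<in> M \<inter> cball 0 R"
    then have "inverse R *\<^sub>R z \<in> M \<inter> cball 0 1"
      using cone \<open>0 < R\<close> by (auto simp: field_simps)
    moreover have "z = R *\<^sub>R (inverse R *\<^sub>R z)"
      using \<open>0 < R\<close> by simp
    ultimately show "z \<in> (\<lambda>z. R *\<^sub>R z) ` (M \<inter> cball 0 1)" by blast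
  qed (use cone \<open>0 < R\<close> in \<open>auto simp: mult_left_le\<close>)
  then show ?thesis
    using compact_scaling[OF assms(2)] by simp
qed

lemma summable_decrements:
  fixes a s :: "nat \<Rightarrow> real"
  assumes "\<And>k. a k + s (Suc k) \<le> s k" "\<And>k. 0 \<le> a k" "\<And>k. 0 \<le> s k"
  shows "summable a"
proof (rule summableI_nonneg_bounded)
  have partial: "(\<Sum>k<n. a k) + s n \<le> s 0" for n
    by (induction n) (use assms(1) in \<open>auto intro: order_trans[rotated]\<close>)
  show "(\<Sum>k<n. a k) \<le> s 0" for n
    using partial[of n] assms(3)[of n] by linarith
qed (fact assms(2))

locale cone_subspace_projections =
  fixes H M :: "'a::{real_inner, complete_space} set"
    and PM :: "'a \<Rightarrow> 'a"
    and y :: "nat \<Rightarrow> 'a"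
  assumes subspace_H: "subspace H" and closed_H: "closed H"
    and cone_M: "\<And>z \<alpha>. z \<in> M \<Longrightarrow> (\<alpha>::real) *\<^sub>R z \<in> M"
    and PM_in: "\<And>u. PM u \<in> M"
    and PM_closest: "\<And>u z. z \<in> M \<Longrightarrow> dist u (PM u) \<le> dist u z"
    and y_Suc: "\<And>k. y (Suc k) = orth_proj H (PM (y k))"
begin

lemma y_Suc_in_H: "y (Suc k) \<in> H"
  using orth_proj_in[OF subspace_H closed_H] by (simp add: y_Suc)

lemma norm_squared_y:
  "(norm (y k))\<^sup>2 = (norm (y k - PM (y k)))\<^sup>2 + (norm (PM (y k)))\<^sup>2"
proof -
  have "orthogonal (y k - PM (y k)) (PM (y k))"
    unfolding orthogonal_def by (rule closest_point_cone_orthogonal[OF cone_M PM_in PM_closest])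
  then show ?thesis
    using norm_add_Pythagorean by fastforce
qed

lemma norm_squared_PM:
  "(norm (PM (y k)))\<^sup>2 = (norm (PM (y k) - y (Suc k)))\<^sup>2 + (norm (y (Suc k)))\<^sup>2"
proof -
  have "orthogonal (PM (y k) - y (Suc k)) (y (Suc k))"
    unfolding orthogonal_def y_Suc
    by (rule orth_proj_orthogonal[OF subspace_H closed_H y_Suc_in_H[unfolded y_Suc]])
  then show ?thesis
    using norm_add_Pythagorean by fastforce
qed

lemma norm_PM_le_norm: "norm (PM (y k)) \<le> norm (y k)"
  using norm_squared_y[of k] by (simp add: power2_le_imp_le)

lemma norm_y_Suc_le_norm_PM: "norm (y (Suc k)) \<le> norm (PM (y k))"
  using norm_squared_PM[of k] by (simp add: power2_le_imp_le)

lemma norm_PM_le: "norm (PM (y k)) \<le> norm (y 0)"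
proof -
  have "decseq (\<lambda>k. norm (y k))"
    using norm_PM_le_norm norm_y_Suc_le_norm_PM by (blast intro: decseq_SucI order_trans)
  then have "norm (y k) \<le> norm (y 0)"
    by (rule decseqD) simp
  then show ?thesis
    using norm_PM_le_norm[of k] by linarith
qed

lemma norm_squared_step:
  "(norm (y k))\<^sup>2 =
     (norm (y k - PM (y k)))\<^sup>2 + (norm (PM (y k) - y (Suc k)))\<^sup>2 + (norm (y (Suc k)))\<^sup>2"
  using norm_squared_y[of k] norm_squared_PM[of k] by simp

lemma residual_tendsto_0: "(\<lambda>k. norm (y k - PM (y k))) \<longlonglongrightarrow> 0"
proof -
  have "summable (\<lambda>k. (norm (y k - PM (y k)))\<^sup>2)"
  proof (rule summable_decrements[where s = "\<lambda>k. (norm (y k))\<^sup>2"])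
    show "(norm (y k - PM (y k)))\<^sup>2 + (norm (y (Suc k)))\<^sup>2 \<le> (norm (y k))\<^sup>2" for k
      using norm_squared_step[of k] by simp
  qed simp_all
  then show ?thesis
    using summable_LIMSEQ_zero by force
qed

lemma projection_residual_tendsto_0: "(\<lambda>k. norm (PM (y k) - y (Suc k))) \<longlonglongrightarrow> 0"
proof -
  have "summable (\<lambda>k. (norm (PM (y k) - y (Suc k)))\<^sup>2)"
  proof (rule summable_decrements[where s = "\<lambda>k. (norm (y k))\<^sup>2"])
    show "(norm (PM (y k) - y (Suc k)))\<^sup>2 + (norm (y (Suc k)))\<^sup>2 \<le> (norm (y k))\<^sup>2" for k
      using norm_squared_step[of k] by simp
  qed simp_all
  then show ?thesis
    using summable_LIMSEQ_zero by force
qed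

lemma convergent_subsequence_to_M_Int_H:
  assumes "compact (M \<inter> cball 0 1)"
  shows "\<exists>r l. strict_mono r \<and> l \<in> M \<inter> H \<and> (y \<circ> r) \<longlonglongrightarrow> l"
proof -
  let ?B = "M \<inter> cball 0 (norm (y 0) + 1)"
  have "compact ?B"
    using compact_cone_Int_cball[OF cone_M assms] by (simp add: add_nonneg_pos)
  moreover have "\<forall>k. PM (y k) \<in> ?B"
    using PM_in norm_PM_le by (simp add: add_increasing2)
  ultimately obtain l s where "l \<in> ?B" "strict_mono s" "((\<lambda>k. PM (y k)) \<circ> s) \<longlonglongrightarrow> l"
    using seq_compactE[OF compact_imp_seq_compact] by metis
  then have "l \<in> M" and PM_lim: "(\<lambda>k. PM (y (s k))) \<longlonglongrightarrow> l"
    by (simp_all add: comp_def)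
  have "(\<lambda>k. PM (y (s k)) - y (Suc (s k))) \<longlonglongrightarrow> 0"
    using LIMSEQ_subseq_LIMSEQ[OF projection_residual_tendsto_0 \<open>strict_mono s\<close>]
    by (simp add: comp_def tendsto_norm_zero_iff)
  from tendsto_diff[OF PM_lim this] have y_lim: "(y \<circ> (Suc \<circ> s)) \<longlonglongrightarrow> l"
    by (simp add: comp_def)
  then have "l \<in> H"
    using closed_sequentially[OF closed_H, of "y \<circ> (Suc \<circ> s)"] y_Suc_in_H by simp
  moreover have "strict_mono (Suc \<circ> s)"
    using \<open>strict_mono s\<close> by (simp add: strict_mono_def)
  ultimately show ?thesis
    using \<open>l \<in> M\<close> y_lim by blast
qed

end

theorem theorem1:
  fixes H M :: "'a::{real_inner, complete_space} set"
    and PM :: "'a \<Rightarrow> 'a"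
    and x :: 'a
    and y :: "nat \<Rightarrow> 'a"
  assumes H_subspace: "subspace H" and H_closed: "closed H"
    and M_closed: "closed M"
    and M_scale: "\<And>z \<alpha>. z \<in> M \<Longrightarrow> (\<alpha>::real) *\<^sub>R z \<in> M"
    and M_proj_exists: "\<forall>u. \<exists>m\<in>M. \<forall>z\<in>M. dist u m \<le> dist u z"
    and PM: "\<And>u. PM u \<in> M \<and> (\<forall>z\<in>M. dist u (PM u) \<le> dist u z)"
    and y0: "y 0 = x"
    and ySuc: "\<And>k. y (Suc k) = orth_proj H (PM (y k))"
  shows "((\<lambda>k. norm (y k - PM (y k))) \<longlonglongrightarrow> 0)
       \<and> ((\<lambda>k. norm (PM (y k) - y (Suc k))) \<longlonglongrightarrow> 0)
       \<and> (compact (M \<inter> cball 0 1) \<longrightarrow>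
            (\<exists>r ys. strict_mono r \<and> ys \<in> M \<inter> H \<and> (y \<circ> r) \<longlonglongrightarrow> ys))"
proof -
  interpret cone_subspace_projections H M PM y
    using H_subspace H_closed M_scale PM ySuc by unfold_locales auto
  show ?thesis
    using residual_tendsto_0 projection_residual_tendsto_0 convergent_subsequence_to_M_Int_H
    by blast
qed

end
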